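(* The following hold. (1) For $n\ge 5$, $P_n^3$ is odd prime if and only if $n\in\{5,6,7,9,10,13\}$. (2) For $n\ge 6$, $P_n^4$ is odd prime if and only if $n\in\{6,7\}$. (3) For $n\ge 7$, $P_n^5$ is odd prime if and only if $n=7$. (4) For every $k\ge 6$ and every $n\ge k+2$, $P_n^k$ is not odd prime. (5) For every $k\ge 3$ and every $n\ge k+2$, $C_n^k$ is not odd prime.
   Context: All graphs are finite and simple. A graph $G$ of order $N$ is odd prime if there is a bijection $\ell:V(G)\to\{1,3,\ldots,2N-1\}$ with $\gcd(\ell(u),\ell(v))=1$ for every edge $uv$. For a graph $G$ and $k\ge 1$, the power $G^k$ has vertex set $V(G)$, with $u\ne v$ adjacent iff their distance in $G$ is at most $k$. $P_n$ is the path and $C_n$ the cycle on $n$ vertices. For paths only $n\ge k+2$ is considered, since otherwise $P_n^k$ is complete. *)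

theory Defs
  imports Main
begin

text \<open>A finite simple graph is given by a finite vertex set V and a symmetric,
irreflexive adjacency predicate E (only its restriction to V matters).\<close>

definition odd_prime_graph :: "'a set \<Rightarrow> ('a \<Rightarrow> 'a \<Rightarrow> bool) \<Rightarrow> bool" where
  "odd_prime_graph V E \<longleftrightarrow>
     (\<exists>lab::'a \<Rightarrow> nat. bij_betw lab V {m. odd m \<and> m < 2 * card V} \<and>
        (\<forall>u\<in>V. \<forall>v\<in>V. E u v \<longrightarrow> coprime (lab u) (lab v)))"

text \<open>Path P_n on vertices 0..n-1 (i adjacent to i+1); the distance of u,v in P_n
is |u - v|, so in the k-th power u \<noteq> v are adjacent iff |u - v| \<le> k.\<close>
definition path_power_adj :: "nat \<Rightarrow> nat \<Rightarrow> nat \<Rightarrow> bool" where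
  "path_power_adj k u v \<longleftrightarrow> u \<noteq> v \<and> (if u \<le> v then v - u else u - v) \<le> k"

text \<open>Cycle C_n on vertices 0..n-1 (i adjacent to i+1 mod n); distance of u,v is
min(|u-v|, n-|u-v|).\<close>
definition cycle_power_adj :: "nat \<Rightarrow> nat \<Rightarrow> nat \<Rightarrow> nat \<Rightarrow> bool" where
  "cycle_power_adj n k u v \<longleftrightarrow> u \<noteq> v \<and>
     (let d = (if u \<le> v then v - u else u - v) in min d (n - d) \<le> k)"

definition path_power_odd_prime :: "nat \<Rightarrow> nat \<Rightarrow> bool" where
  "path_power_odd_prime n k \<longleftrightarrow> odd_prime_graph {0..<n} (path_power_adj k)"

definition cycle_power_odd_prime :: "nat \<Rightarrow> nat \<Rightarrow> bool" where
  "cycle_power_odd_prime n k \<longleftrightarrow> odd_prime_graph {0..<n} (cycle_power_adj n k)"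

end

theory Submission imports Defs begin

text \<open>In an odd prime labelling of a graph of order n the labels divisible by 3, namely
  3, 9, 15, ..., are pairwise non-coprime, so their (n + 1) div 3 vertices form an independent set.
  In P_n^k any two vertices of an independent set are more than k apart, which forces
  (n + 1) div 3 * (k + 1) \<le> n + k; in C_n^k the gap that wraps around counts as well, giving
  (n + 1) div 3 * (k + 1) \<le> n. These bounds leave only the listed small cases, each of
  which is realised by an explicit labelling.\<close>

definition independent_set :: "('a \<Rightarrow> 'a \<Rightarrow> bool) \<Rightarrow> 'a set \<Rightarrow> bool" where
  "independent_set E S \<longleftrightarrow> (\<forall>u\<in>S. \<forall>v\<in>S. \<not> E u v)"

lemma odd_numbers_below_eq_image: "{m::nat. odd m \<and> m < 2 * n} = (\<lambda>j. 2 * j + 1) ` {..<n}"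
  by (auto elim!: oddE)

text \<open>The hypotheses are phrased with lists so that \<open>code_simp\<close> can decide them for concrete
  labellings; it does not evaluate quantifiers over \<open>{0..<n}\<close>.\<close>

lemma odd_prime_graph_upt_by_labels:
  assumes sorted_labels: "sort ls = map (\<lambda>j. 2 * j + 1) [0..<n]"
    and coprime_labels: "\<forall>u\<in>set [0..<n]. \<forall>v\<in>set [0..<n]. E u v \<longrightarrow> coprime (ls ! u) (ls ! v)"
  shows "odd_prime_graph {0..<n} E"
proof -
  have "length ls = n" "distinct ls"
    using arg_cong[OF sorted_labels, of length] arg_cong[OF sorted_labels, of distinct]
    by (simp_all add: distinct_map inj_on_def)
  moreover have "set ls = {m. odd m \<and> m < 2 * card {0..<n}}"
    using arg_cong[OF sorted_labels, of set] by (simp add: odd_numbers_below_eq_image lessThan_atLeast0)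
  ultimately have "bij_betw ((!) ls) {0..<n} {m. odd m \<and> m < 2 * card {0..<n}}"
    using bij_betw_nth[of ls "{0..<n}"] by (simp add: atLeast0LessThan)
  with coprime_labels show ?thesis
    unfolding odd_prime_graph_def by auto
qed

lemma odd_prime_graph_independent_set:
  assumes "odd_prime_graph V E"
  obtains S where "S \<subseteq> V" "(card V + 1) div 3 \<le> card S" "independent_set E S"
proof -
  obtain lab where bij: "bij_betw lab V {m. odd m \<and> m < 2 * card V}"
    and coprime_lab: "\<forall>u\<in>V. \<forall>v\<in>V. E u v \<longrightarrow> coprime (lab u) (lab v)"
    using assms unfolding odd_prime_graph_def by blast
  define S where "S = {v\<in>V. 3 dvd lab v}"
  have multiples_of_3: "(\<lambda>j. 6 * j + 3) ` {..<(card V + 1) div 3} \<subseteq> lab ` S"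
  proof
    fix m assume "m \<in> (\<lambda>j. 6 * j + 3) ` {..<(card V + 1) div 3}"
    then obtain j where "j < (card V + 1) div 3" and m: "m = 3 * (2 * j + 1)"
      by auto
    then have "odd m \<and> m < 2 * card V"
      by presburger
    then have "m \<in> lab ` V"
      using bij_betw_imp_surj_on[OF bij] by simp
    then obtain v where "v \<in> V" "m = lab v"
      by blast
    moreover have "3 dvd m"
      using m by simp
    ultimately show "m \<in> lab ` S"
      unfolding S_def by blast
  qed
  have "lab ` S \<subseteq> {..<2 * card V}"
    using bij_betw_imp_surj_on[OF bij] unfolding S_def by auto
  then have "finite (lab ` S)"
    by (rule finite_subset) simp
  moreover have "inj_on lab S"
    using bij_betw_imp_inj_on[OF bij] unfolding S_def by (rule inj_on_subset) blast
  ultimately have "card ((\<lambda>j::nat. 6 * j + 3) ` {..<(card V + 1) div 3}) \<le> card S"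
    using multiples_of_3 by (metis card_image card_mono)
  then have card_S: "(card V + 1) div 3 \<le> card S"
    by (simp add: card_image inj_on_def)
  have "independent_set E S"
    unfolding independent_set_def
  proof (intro ballI notI)
    fix u v assume "u \<in> S" "v \<in> S" "E u v"
    then have "coprime (lab u) (lab v)" "3 dvd lab u" "3 dvd lab v"
      using coprime_lab unfolding S_def by auto
    then show False
      using coprime_common_divisor[of "lab u" "lab v" 3] by simp
  qed
  moreover have "S \<subseteq> V"
    unfolding S_def by blast
  ultimately show ?thesis
    using card_S that by blast
qed

text \<open>Points of S more than k apart lie in different blocks of k + 1 consecutive integers.\<close>

lemma card_sparse_subset_le:
  fixes S :: "nat set"
  assumes "S \<subseteq> {a..<b}" and sparse: "\<forall>i\<in>S. \<forall>j\<in>S. i < j \<longrightarrow> k < j - i"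
  shows "card S * (k + 1) \<le> b - a + k"
proof -
  define block where "block i = (i - a) div (k + 1)" for i
  have block_less: "block i < block j" if "i - a + (k + 1) \<le> j - a" for i j
  proof -
    have "block i + 1 = (i - a + (k + 1)) div (k + 1)"
      unfolding block_def using div_add_self2[of "k + 1" "i - a"] by simp
    also have "\<dots> \<le> block j"
      unfolding block_def using that by (rule div_le_mono)
    finally show ?thesis by simp
  qed
  have "strict_mono_on S block"
    using assms by (intro strict_mono_onI block_less) force
  then have "inj_on block S"
    by (rule strict_mono_on_imp_inj_on)
  moreover have "block ` S \<subseteq> {..<block (b + k)}"
    using assms(1) by (auto simp: subset_iff intro!: block_less)
  ultimately have "card S \<le> block (b + k)"
    by (metis card_image card_lessThan card_mono finite_lessThan)
  then have "card S * (k + 1) \<le> (b + k - a) div (k + 1) * (k + 1)"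
    unfolding block_def by (rule mult_le_mono1)
  also have "\<dots> \<le> b + k - a"
    by (rule div_times_less_eq_dividend)
  also have "\<dots> \<le> b - a + k"
    by linarith
  finally show ?thesis .
qed

lemma path_power_independent_set_card:
  assumes "S \<subseteq> {0..<n}" "independent_set (path_power_adj k) S"
  shows "card S * (k + 1) \<le> n + k"
proof -
  have "k < j - i" if "i \<in> S" "j \<in> S" "i < j" for i j
  proof -
    have "\<not> path_power_adj k i j"
      using assms(2) that unfolding independent_set_def by blast
    with \<open>i < j\<close> show ?thesis
      unfolding path_power_adj_def by simp
  qed
  then show ?thesis
    using card_sparse_subset_le[OF assms(1)] by simp
qed

lemma cycle_power_independent_set_card:
  assumes S: "S \<subseteq> {0..<n}" "independent_set (cycle_power_adj n k) S" and "2 \<le> card S"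
  shows "card S * (k + 1) \<le> n"
proof -
  have "finite S" "S \<noteq> {}"
    using assms finite_subset by fastforce+
  define a where "a = Min S"
  define b where "b = Max S"
  have ab: "a \<in> S" "b \<in> S" "S \<subseteq> {a..<b + 1}"
    using \<open>finite S\<close> \<open>S \<noteq> {}\<close> unfolding a_def b_def by (auto simp: less_Suc_eq_le)
  have "a < b"
  proof (rule ccontr)
    assume "\<not> a < b"
    with ab have "S \<subseteq> {a}" by auto
    with \<open>2 \<le> card S\<close> show False
      using card_mono[of "{a}" S] by simp
  qed
  have far: "k < j - i \<and> k < n - (j - i)" if "i \<in> S" "j \<in> S" "i < j" for i j
    using S that unfolding independent_set_def cycle_power_adj_def Let_def by force
  have "card S * (k + 1) \<le> b + 1 - a + k"
    using card_sparse_subset_le[OF ab(3)] far by blast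
  also have "\<dots> \<le> n"
    using far[OF ab(1,2) \<open>a < b\<close>] \<open>a < b\<close> by linarith
  finally show ?thesis .
qed

lemma path_power_odd_prime_bound:
  assumes "path_power_odd_prime n k"
  shows "(n + 1) div 3 * (k + 1) \<le> n + k"
proof -
  obtain S where S: "S \<subseteq> {0..<n}" "(card {0..<n} + 1) div 3 \<le> card S"
      "independent_set (path_power_adj k) S"
    using assms unfolding path_power_odd_prime_def by (rule odd_prime_graph_independent_set)
  have "(n + 1) div 3 * (k + 1) \<le> card S * (k + 1)"
    using S(2) by (intro mult_le_mono1) simp
  also have "\<dots> \<le> n + k"
    using S(1,3) by (rule path_power_independent_set_card)
  finally show ?thesis .
qed

lemma cycle_power_odd_prime_bound:
  assumes "cycle_power_odd_prime n k" "5 \<le> n"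
  shows "(n + 1) div 3 * (k + 1) \<le> n"
proof -
  obtain S where S: "S \<subseteq> {0..<n}" "(card {0..<n} + 1) div 3 \<le> card S"
      "independent_set (cycle_power_adj n k) S"
    using assms(1) unfolding cycle_power_odd_prime_def by (rule odd_prime_graph_independent_set)
  have "2 \<le> card S"
    using \<open>5 \<le> n\<close> S(2) by simp
  have "(n + 1) div 3 * (k + 1) \<le> card S * (k + 1)"
    using S(2) by (intro mult_le_mono1) simp
  also have "\<dots> \<le> n"
    using S(1,3) \<open>2 \<le> card S\<close> by (rule cycle_power_independent_set_card)
  finally show ?thesis .
qed

lemma path_power_not_odd_prime:
  assumes "6 \<le> k" "k + 2 \<le> n"
  shows "\<not> path_power_odd_prime n k"
proof
  assume "path_power_odd_prime n k"
  have "(n + 1) div 3 * 7 \<le> (n + 1) div 3 * (k + 1)"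
    using \<open>6 \<le> k\<close> by (intro mult_le_mono2) simp
  also have "\<dots> \<le> n + k"
    using \<open>path_power_odd_prime n k\<close> by (rule path_power_odd_prime_bound)
  finally have "(n + 1) div 3 * 7 + 2 \<le> 2 * n" "8 \<le> n"
    using assms by linarith+
  then show False by presburger
qed

lemma cycle_power_not_odd_prime:
  assumes "3 \<le> k" "k + 2 \<le> n"
  shows "\<not> cycle_power_odd_prime n k"
proof
  assume "cycle_power_odd_prime n k"
  have "5 \<le> n"
    using assms by linarith
  have "(n + 1) div 3 * 4 \<le> (n + 1) div 3 * (k + 1)"
    using \<open>3 \<le> k\<close> by (intro mult_le_mono2) simp
  also have "\<dots> \<le> n"
    using \<open>cycle_power_odd_prime n k\<close> \<open>5 \<le> n\<close> by (rule cycle_power_odd_prime_bound)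
  finally show False
    using \<open>5 \<le> n\<close> by presburger
qed

lemma path_power_odd_prime_witnesses:
  "path_power_odd_prime 5 3" "path_power_odd_prime 6 3" "path_power_odd_prime 7 3"
  "path_power_odd_prime 9 3" "path_power_odd_prime 10 3" "path_power_odd_prime 13 3"
  "path_power_odd_prime 6 4" "path_power_odd_prime 7 4" "path_power_odd_prime 7 5"
proof -
  show "path_power_odd_prime 5 3"
    unfolding path_power_odd_prime_def
    by (rule odd_prime_graph_upt_by_labels[where ls = "[3, 1, 5, 7, 9]"]; code_simp)
  show "path_power_odd_prime 6 3"
    unfolding path_power_odd_prime_def
    by (rule odd_prime_graph_upt_by_labels[where ls = "[1, 3, 5, 7, 11, 9]"]; code_simp)
  show "path_power_odd_prime 7 3"
    unfolding path_power_odd_prime_def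
    by (rule odd_prime_graph_upt_by_labels[where ls = "[1, 3, 5, 7, 11, 9, 13]"]; code_simp)
  show "path_power_odd_prime 9 3"
    unfolding path_power_odd_prime_def
    by (rule odd_prime_graph_upt_by_labels[where ls = "[3, 1, 5, 7, 9, 11, 13, 17, 15]"]; code_simp)
  show "path_power_odd_prime 10 3"
    unfolding path_power_odd_prime_def
    by (rule odd_prime_graph_upt_by_labels[where ls = "[1, 3, 5, 7, 11, 9, 13, 17, 19, 15]"]; code_simp)
  show "path_power_odd_prime 13 3"
    unfolding path_power_odd_prime_def
    by (rule odd_prime_graph_upt_by_labels[where ls = "[3, 1, 5, 7, 9, 11, 13, 25, 21, 17, 19, 23, 15]"]; code_simp)
  show "path_power_odd_prime 6 4"
    unfolding path_power_odd_prime_def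
    by (rule odd_prime_graph_upt_by_labels[where ls = "[3, 1, 5, 7, 11, 9]"]; code_simp)
  show "path_power_odd_prime 7 4"
    unfolding path_power_odd_prime_def
    by (rule odd_prime_graph_upt_by_labels[where ls = "[1, 3, 5, 7, 11, 13, 9]"]; code_simp)
  show "path_power_odd_prime 7 5"
    unfolding path_power_odd_prime_def
    by (rule odd_prime_graph_upt_by_labels[where ls = "[3, 1, 5, 7, 11, 13, 9]"]; code_simp)
qed

theorem theorem5p3:
  shows "(\<forall>n\<ge>5. path_power_odd_prime n 3 \<longleftrightarrow> n \<in> {5,6,7,9,10,13})
       \<and> (\<forall>n\<ge>6. path_power_odd_prime n 4 \<longleftrightarrow> n \<in> {6,7})
       \<and> (\<forall>n\<ge>7. path_power_odd_prime n 5 \<longleftrightarrow> n = 7)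
       \<and> (\<forall>k\<ge>6. \<forall>n\<ge>k+2. \<not> path_power_odd_prime n k)
       \<and> (\<forall>k\<ge>3. \<forall>n\<ge>k+2. \<not> cycle_power_odd_prime n k)"
proof (intro conjI allI impI iffI)
  fix n :: nat
  assume "5 \<le> n" "path_power_odd_prime n 3"
  then show "n \<in> {5,6,7,9,10,13}"
    using path_power_odd_prime_bound[of n 3] by simp presburger
next
  fix n :: nat
  assume "6 \<le> n" "path_power_odd_prime n 4"
  then show "n \<in> {6,7}"
    using path_power_odd_prime_bound[of n 4] by simp presburger
next
  fix n :: nat
  assume "7 \<le> n" "path_power_odd_prime n 5"
  then show "n = 7"
    using path_power_odd_prime_bound[of n 5] by presburger
qed (use path_power_odd_prime_witnesses path_power_not_odd_prime cycle_power_not_odd_prime in auto)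

end
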